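(* For the system below, the Kelvin theorem for the fluid circulation alone is $$\frac{d}{dt}\oint_{c(\widehat{\mathbf{v}})}\widehat{\mathbf{v}}\cdot d\mathbf{r}=\oint_{c(\widehat{\mathbf{v}})}\frac12 d|\widehat{\mathbf{v}}|^2-\frac{\sigma^2}{2}\widetilde{w}^2\,d\big(1+\epsilon\sigma^2|\nabla_{\mathbf{r}}\zeta|^2\big)^2-\frac{2\epsilon\sigma^4}{D}\mathrm{div}\big(D\widetilde{w}(\widehat{w}\nabla_{\mathbf{r}}\zeta)\big)\,d\zeta,$$ where $c(\widehat{\mathbf{v}})$ is a closed material loop moving with velocity $\widehat{\mathbf{v}}$.
   Context: On a free surface $z=\zeta(\mathbf{r},t)$ over horizontal coordinates $\mathbf{r}=(x,y)$, consider the augmented classical water-wave equations (ACWWE) for the horizontal transport velocity $\widehat{\mathbf{v}}$, areal density $D$, elevation $\zeta$ and vertical velocity $\widehat{w}$, with aspect ratio $\sigma$, Froude number $Fr$ and constant $0\le\epsilon\le1$: $(\partial_t+\mathcal{L}_{\widehat{\mathbf{v}}})(\widehat{\mathbf{v}}\cdot d\mathbf{x}+\sigma^2\widetilde{w}\,d\zeta)=d\varpi$; $\partial_tD+\mathrm{div}_{\mathbf{r}}(D\widehat{\mathbf{v}})=0$; $\partial_t\zeta+\widehat{\mathbf{v}}\cdot\nabla_{\mathbf{r}}\zeta=\widehat{w}(1+\epsilon\sigma^2|\nabla_{\mathbf{r}}\zeta|^2)$; $\partial_t\widetilde{w}+\widehat{\mathbf{v}}\cdot\nabla_{\mathbf{r}}\widetilde{w}=-1/(\sigma^2Fr^2)+(2\epsilon\sigma^2/D)\,\mathrm{div}(D\widetilde{w}\,\widehat{w}\,\nabla_{\mathbf{r}}\zeta)$,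 where $\varpi=\tfrac12(|\widehat{\mathbf{v}}|^2+\sigma^2\widehat{w}^2)-\zeta/Fr^2$ and $\widetilde{w}=\widehat{w}/(1+\epsilon\sigma^2|\nabla_{\mathbf{r}}\zeta|^2)$. $\mathcal{L}_{\widehat{\mathbf{v}}}$ denotes the Lie derivative along $\widehat{\mathbf{v}}$. *)

theory Defs
  imports "HOL-Analysis.Analysis"
begin

text \<open>Space-time fields are functions of time t :: real and a point x of some
 real normed vector space (here real^2 for the horizontal plane, real for loop parameter).\<close>

definition pdir :: "'a::real_normed_vector \<Rightarrow> (real \<Rightarrow> 'a \<Rightarrow> real) \<Rightarrow> real \<Rightarrow> 'a \<Rightarrow> real" where
  "pdir u f t x = deriv (\<lambda>h. f t (x + h *\<^sub>R u)) 0"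

definition ptime :: "(real \<Rightarrow> 'a \<Rightarrow> real) \<Rightarrow> real \<Rightarrow> 'a \<Rightarrow> real" where
  "ptime f t x = deriv (\<lambda>s. f s x) t"

primrec Ck :: "'a::real_normed_vector set \<Rightarrow> nat \<Rightarrow> (real \<Rightarrow> 'a \<Rightarrow> real) \<Rightarrow> bool" where
  "Ck U 0 f = continuous_on UNIV (\<lambda>p. f (fst p) (snd p))"
| "Ck U (Suc k) f = (continuous_on UNIV (\<lambda>p. f (fst p) (snd p))
      \<and> (\<forall>t x. (\<lambda>s. f s x) differentiable (at t)
             \<and> (\<forall>u\<in>U. (\<lambda>h. f t (x + h *\<^sub>R u)) differentiable (at 0)))
      \<and> Ck U k (ptime f) \<and> (\<forall>u\<in>U. Ck U k (pdir u f)))"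

definition smooth_st :: "'a::real_normed_vector set \<Rightarrow> (real \<Rightarrow> 'a \<Rightarrow> real) \<Rightarrow> bool" where
  "smooth_st U f \<longleftrightarrow> (\<forall>k. Ck U k f)"

abbreviation Basis2 :: "(real^2) set" where
  "Basis2 \<equiv> {axis i 1 | i. True}"

definition grad :: "(real \<Rightarrow> real^2 \<Rightarrow> real) \<Rightarrow> real \<Rightarrow> real^2 \<Rightarrow> real^2" where
  "grad f t x = (\<chi> i. pdir (axis i 1) f t x)"

definition divg :: "(real \<Rightarrow> real^2 \<Rightarrow> real^2) \<Rightarrow> real \<Rightarrow> real^2 \<Rightarrow> real" where
  "divg F t x = (\<Sum>i\<in>UNIV. pdir (axis i 1) (\<lambda>s y. F s y $ i) t x)"

definition ptimev :: "(real \<Rightarrow> real^2 \<Rightarrow> real^2) \<Rightarrow> real \<Rightarrow> real^2 \<Rightarrow> real^2" where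
  "ptimev F t x = (\<chi> i. ptime (\<lambda>s y. F s y $ i) t x)"

definition lie1 :: "(real \<Rightarrow> real^2 \<Rightarrow> real^2) \<Rightarrow> (real \<Rightarrow> real^2 \<Rightarrow> real^2) \<Rightarrow> real \<Rightarrow> real^2 \<Rightarrow> real^2" where
  "lie1 v \<alpha> t x = (\<chi> i. \<Sum>j\<in>UNIV.
      v t x $ j * pdir (axis j 1) (\<lambda>s y. \<alpha> s y $ i) t x
    + \<alpha> t x $ j * pdir (axis i 1) (\<lambda>s y. v s y $ j) t x)"

definition Phi :: "real \<Rightarrow> real \<Rightarrow> (real \<Rightarrow> real^2 \<Rightarrow> real) \<Rightarrow> real \<Rightarrow> real^2 \<Rightarrow> real" where
  "Phi \<sigma> \<epsilon> \<zeta> t x = 1 + \<epsilon> * \<sigma>^2 * (norm (grad \<zeta> t x))^2"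

definition wtil :: "real \<Rightarrow> real \<Rightarrow> (real \<Rightarrow> real^2 \<Rightarrow> real) \<Rightarrow> (real \<Rightarrow> real^2 \<Rightarrow> real) \<Rightarrow> real \<Rightarrow> real^2 \<Rightarrow> real" where
  "wtil \<sigma> \<epsilon> \<zeta> w t x = w t x / Phi \<sigma> \<epsilon> \<zeta> t x"

definition loop_int :: "(real \<Rightarrow> real^2 \<Rightarrow> real^2) \<Rightarrow> (real \<Rightarrow> real \<Rightarrow> real^2) \<Rightarrow> real \<Rightarrow> real" where
  "loop_int \<omega> c t = integral {0..1} (\<lambda>s. \<omega> t (c t s) \<bullet> vector_derivative (c t) (at s))"

end

theory Submission
  imports Defs
begin

(*
  If every point of the loop c(t) moves with the velocity v, then for every smooth covector
  field alpha
      d/dt int_{c(t)} alpha = int_{c(t)} (d_t + L_v) alpha.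
  Differentiating under the integral sign, the integrand alpha(t, c) . c_s changes through
  d_t alpha + v . grad alpha and through the tangent c_s, which by the symmetry of mixed partials
  is stretched by the velocity gradient; together these give the Lie derivative. The formula
  holds for open curves as well.

  For alpha = v the momentum equation reads (d_t + L_v)(v dx + sigma^2 wtil dzeta) = d varpi.
  As d_t + L_v is a derivation commuting with d, (d_t + L_v)(wtil dzeta) is
  (D wtil/Dt) dzeta + wtil d(D zeta/Dt) with D/Dt = d_t + v . grad. The kinematic and vertical
  equations replace D zeta/Dt by w Phi and D wtil/Dt, and since w = wtil Phi the terms
  sigma^2 w dw cancel, leaving the stated integrand.
*)

lemma smooth_st_continuous_on:
  "smooth_st U f \<Longrightarrow> continuous_on UNIV (\<lambda>p. f (fst p) (snd p))"
  by (metis Ck.simps(1) smooth_st_def)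

lemma smooth_st_ptime: "smooth_st U f \<Longrightarrow> smooth_st U (ptime f)"
  unfolding smooth_st_def by (metis Ck.simps(2))

lemma smooth_st_pdir: "smooth_st U f \<Longrightarrow> u \<in> U \<Longrightarrow> smooth_st U (pdir u f)"
  unfolding smooth_st_def by (metis Ck.simps(2))

lemma smooth_st_continuous_on_compose:
  assumes "smooth_st U f" "continuous_on S \<tau>" "continuous_on S p"
  shows "continuous_on S (\<lambda>z. f (\<tau> z) (p z))"
  using continuous_on_compose2[OF smooth_st_continuous_on[OF assms(1)], of S "\<lambda>z. (\<tau> z, p z)"] assms(2,3)
  by (auto intro: continuous_on_Pair)

lemma has_real_derivative_ptimeI:
  "(\<lambda>s. f s x) differentiable (at t) \<Longrightarrow> ((\<lambda>s. f s x) has_real_derivative ptime f t x) (at t)"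
  unfolding ptime_def by (simp add: DERIV_deriv_iff_real_differentiable)

lemma has_real_derivative_pdirI:
  "(\<lambda>h. f t (x + h *\<^sub>R u)) differentiable (at 0) \<Longrightarrow>
   ((\<lambda>h. f t (x + h *\<^sub>R u)) has_real_derivative pdir u f t x) (at 0)"
  unfolding pdir_def by (simp add: DERIV_deriv_iff_real_differentiable)

lemma ptime_eqI: "((\<lambda>s. f s x) has_real_derivative D) (at t) \<Longrightarrow> ptime f t x = D"
  unfolding ptime_def by (rule DERIV_imp_deriv)

lemma pdir_eqI: "((\<lambda>h. f t (x + h *\<^sub>R u)) has_real_derivative D) (at 0) \<Longrightarrow> pdir u f t x = D"
  unfolding pdir_def by (rule DERIV_imp_deriv)

lemma smooth_st_differentiable_time: "smooth_st U f \<Longrightarrow> (\<lambda>s. f s x) differentiable (at t)"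
  unfolding smooth_st_def using Ck.simps(2) by blast

lemma smooth_st_differentiable_along:
  "smooth_st U f \<Longrightarrow> u \<in> U \<Longrightarrow> (\<lambda>h. f t (x + h *\<^sub>R u)) differentiable (at 0)"
  unfolding smooth_st_def using Ck.simps(2) by blast

lemma smooth_st_has_real_derivative_ptime:
  "smooth_st U f \<Longrightarrow> ((\<lambda>s. f s x) has_real_derivative ptime f t x) (at t)"
  by (intro has_real_derivative_ptimeI smooth_st_differentiable_time)

lemma smooth_st_has_real_derivative_pdir:
  assumes "smooth_st U f" "u \<in> U"
  shows "((\<lambda>h. f t (x + h *\<^sub>R u)) has_real_derivative pdir u f t (x + a *\<^sub>R u)) (at a)"
proof -
  have shift: "(\<lambda>h. f t (x + (h + a) *\<^sub>R u)) = (\<lambda>h. f t ((x + a *\<^sub>R u) + h *\<^sub>R u))"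
    by (simp add: algebra_simps)
  have "(\<lambda>h. f t ((x + a *\<^sub>R u) + h *\<^sub>R u)) differentiable (at 0)"
    using assms by (rule smooth_st_differentiable_along)
  then have "((\<lambda>h. f t (x + (h + a) *\<^sub>R u)) has_real_derivative pdir u f t (x + a *\<^sub>R u)) (at 0)"
    unfolding shift by (rule has_real_derivative_pdirI)
  then show ?thesis
    using DERIV_shift[of "\<lambda>h. f t (x + h *\<^sub>R u)" _ 0 a] by (simp only: add_0_left)
qed

section \<open>Differentiation under the integral sign and mixed partials\<close>

lemma has_real_derivative_integral_parameter:
  fixes F F' :: "real \<Rightarrow> real \<Rightarrow> real"
  assumes deriv: "\<And>\<tau> s. ((\<lambda>\<tau>. F \<tau> s) has_real_derivative F' \<tau> s) (at \<tau>)"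
    and integrable: "\<And>\<tau>. F \<tau> integrable_on {a..b}"
    and cont: "continuous_on UNIV (\<lambda>p. F' (fst p) (snd p))"
  shows "((\<lambda>\<tau>. integral {a..b} (F \<tau>)) has_real_derivative integral {a..b} (F' t)) (at t)"
  using leibniz_rule_field_derivative[of UNIV a b F F' t] deriv integrable
    continuous_on_subset[OF cont, of "UNIV \<times> cbox a b"]
  by (auto simp: box_real case_prod_unfold)

lemma clairaut:
  fixes F Fa Fb Fab :: "real \<Rightarrow> real \<Rightarrow> real"
  assumes da: "\<And>a b. ((\<lambda>a. F a b) has_real_derivative Fa a b) (at a)"
    and db: "\<And>a b. ((\<lambda>b. F a b) has_real_derivative Fb a b) (at b)"
    and dab: "\<And>a b. ((\<lambda>b. Fa a b) has_real_derivative Fab a b) (at b)"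
    and cont: "continuous_on UNIV (\<lambda>p. Fab (fst p) (snd p))"
  shows "((\<lambda>a. Fb a b) has_real_derivative Fab a b) (at a)"
proof -
  \<comment> \<open>\<open>F y b = F a0 b + \<integral>\<^bsub>a0..y\<^esub> Fa r b\<close>: differentiate in \<open>b\<close> under the integral, then in \<open>y\<close>.\<close>
  define a0 where "a0 = a - 1"
  have ftc: "((\<lambda>r. Fa r b) has_integral (F y b - F a0 b)) {a0..y}" if "a0 \<le> y" for y b
    using that
    by (intro fundamental_theorem_of_calculus)
       (auto simp: has_real_derivative_iff_has_vector_derivative[symmetric] intro!: DERIV_subset[OF da])
  have Fb_eq: "Fb y b = Fb a0 b + integral {a0..y} (\<lambda>r. Fab r b)" if "a0 \<le> y" for y b
  proof -
    have cont_swap: "continuous_on UNIV (\<lambda>p. Fab (snd p) (fst p))"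
      using continuous_on_compose2[OF cont continuous_on_swap] by (simp add: prod.swap_def)
    have "((\<lambda>b. integral {a0..y} (\<lambda>r. Fa r b)) has_real_derivative integral {a0..y} (\<lambda>r. Fab r b)) (at b)"
      by (rule has_real_derivative_integral_parameter[of "\<lambda>b r. Fa r b" "\<lambda>b r. Fab r b", OF dab
            has_integral_integrable[OF ftc[OF that]] cont_swap])
    then have "((\<lambda>b. F a0 b + integral {a0..y} (\<lambda>r. Fa r b)) has_real_derivative
        Fb a0 b + integral {a0..y} (\<lambda>r. Fab r b)) (at b)"
      by (intro DERIV_add db)
    moreover have "(\<lambda>b. F a0 b + integral {a0..y} (\<lambda>r. Fa r b)) = (\<lambda>b. F y b)"
      using integral_unique[OF ftc[OF that]] by auto
    ultimately show ?thesis using DERIV_unique db by metis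
  qed
  have "continuous_on {a0..a+1} (\<lambda>r. Fab r b)"
    using continuous_on_compose2[OF cont continuous_on_Pair[OF continuous_on_id continuous_on_const]] by simp
  then have "((\<lambda>y. integral {a0..y} (\<lambda>r. Fab r b)) has_real_derivative Fab a b) (at a within {a0..a+1})"
    by (rule integral_has_real_derivative) (auto simp: a0_def)
  then have "((\<lambda>y. integral {a0..y} (\<lambda>r. Fab r b)) has_real_derivative Fab a b) (at a)"
    using at_within_Icc_at[of a0 a "a+1"] by (simp add: a0_def)
  then have "((\<lambda>y. Fb a0 b + integral {a0..y} (\<lambda>r. Fab r b)) has_real_derivative Fab a b) (at a)"
    using DERIV_add[OF DERIV_const[of "Fb a0 b" "at a"]] by (simp only: add_0_left)
  then show ?thesis
  proof (rule has_field_derivative_transform_within_open[where S="{a0<..}"])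
    show "Fb a0 b + integral {a0..y} (\<lambda>r. Fab r b) = Fb y b" if "y \<in> {a0<..}" for y
      using Fb_eq[of y b] that by simp
  qed (simp_all add: a0_def)
qed

lemma pdir_ptime_commute:
  assumes f: "smooth_st U f" and u: "u \<in> U"
  shows "pdir u (ptime f) t x = ptime (pdir u f) t x"
proof -
  have "((\<lambda>a. f (b + t) (x + a *\<^sub>R u)) has_real_derivative pdir u f (b + t) (x + a *\<^sub>R u)) (at a)"
    for a b
    by (rule smooth_st_has_real_derivative_pdir[OF f u])
  moreover have "((\<lambda>b. f (b + t) (x + a *\<^sub>R u)) has_real_derivative ptime f (b + t) (x + a *\<^sub>R u)) (at b)"
    for a b
    using DERIV_shift[of "\<lambda>s. f s (x + a *\<^sub>R u)" _ b t] smooth_st_has_real_derivative_ptime[OF f]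
    by blast
  moreover have "((\<lambda>b. pdir u f (b + t) (x + a *\<^sub>R u)) has_real_derivative
      ptime (pdir u f) (b + t) (x + a *\<^sub>R u)) (at b)" for a b
    using DERIV_shift[of "\<lambda>s. pdir u f s (x + a *\<^sub>R u)" _ b t]
      smooth_st_has_real_derivative_ptime[OF smooth_st_pdir[OF f u]]
    by blast
  moreover have "continuous_on UNIV (\<lambda>p. ptime (pdir u f) (snd p + t) (x + fst p *\<^sub>R u))"
    by (intro smooth_st_continuous_on_compose[OF smooth_st_ptime[OF smooth_st_pdir[OF f u]]] continuous_intros)
  \<comment> \<open>\<open>0 + t\<close> matches the instance \<open>b = 0\<close> of the conclusion of clairaut\<close>
  ultimately have "((\<lambda>a. ptime f (0 + t) (x + a *\<^sub>R u)) has_real_derivative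
      ptime (pdir u f) (0 + t) (x + 0 *\<^sub>R u)) (at 0)"
    by (rule clairaut)
  then show ?thesis by (intro pdir_eqI) simp
qed

lemma pdir_pdir_commute:
  assumes f: "smooth_st U f" and u: "u \<in> U" and u': "u' \<in> U"
  shows "pdir u' (pdir u f) t x = pdir u (pdir u' f) t x"
proof -
  have "((\<lambda>a. f t (x + a *\<^sub>R u' + b *\<^sub>R u)) has_real_derivative
      pdir u' f t (x + a *\<^sub>R u' + b *\<^sub>R u)) (at a)" for a b
    using smooth_st_has_real_derivative_pdir[OF f u', of t "x + b *\<^sub>R u" a]
    by (simp add: algebra_simps)
  moreover have "((\<lambda>b. f t (x + a *\<^sub>R u' + b *\<^sub>R u)) has_real_derivative
      pdir u f t (x + a *\<^sub>R u' + b *\<^sub>R u)) (at b)" for a b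
    by (rule smooth_st_has_real_derivative_pdir[OF f u])
  moreover have "((\<lambda>b. pdir u' f t (x + a *\<^sub>R u' + b *\<^sub>R u)) has_real_derivative
      pdir u (pdir u' f) t (x + a *\<^sub>R u' + b *\<^sub>R u)) (at b)" for a b
    by (rule smooth_st_has_real_derivative_pdir[OF smooth_st_pdir[OF f u'] u])
  moreover have "continuous_on UNIV (\<lambda>p. pdir u (pdir u' f) t (x + fst p *\<^sub>R u' + snd p *\<^sub>R u))"
    by (intro smooth_st_continuous_on_compose[OF smooth_st_pdir[OF smooth_st_pdir[OF f u'] u]] continuous_intros)
  ultimately have "((\<lambda>a. pdir u f t (x + a *\<^sub>R u' + 0 *\<^sub>R u)) has_real_derivative
      pdir u (pdir u' f) t (x + 0 *\<^sub>R u' + 0 *\<^sub>R u)) (at 0)"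
    by (rule clairaut)
  then show ?thesis by (intro pdir_eqI) simp
qed

lemma grad_nth [simp]: "grad f t x $ i = pdir (axis i 1) f t x"
  by (simp add: grad_def)

lemma inner_vec2: "(a::real^2) \<bullet> b = a$1 * b$1 + a$2 * b$2"
  by (simp add: inner_vec_def sum_2)

lemma norm_vec2: "(norm (z::real^2))^2 = (z$1)^2 + (z$2)^2"
  by (subst power2_norm_eq_inner) (simp add: inner_vec2 power2_eq_square)

lemma axis_in_Basis2: "axis i 1 \<in> Basis2"
  by blast

lemma has_derivative_plane_partials:
  fixes g g2 :: "real^2 \<Rightarrow> real"
  assumes d1: "((\<lambda>h. g (x + h *\<^sub>R axis 1 1)) has_real_derivative g1) (at 0)"
    and d2: "\<And>y. ((\<lambda>h. g (y + h *\<^sub>R axis 2 1)) has_real_derivative g2 y) (at 0)"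
    and c2: "continuous_on UNIV g2"
  shows "(g has_derivative (\<lambda>k. k$1 * g1 + k$2 * g2 x)) (at x)"
proof -
  define G where "G a b = g (x + a *\<^sub>R axis 1 1 + b *\<^sub>R axis 2 1)" for a b
  define g2' where "g2' a b = g2 (x + a *\<^sub>R axis 1 1 + b *\<^sub>R axis 2 1)" for a b
  have G1: "((\<lambda>a. G a 0) has_derivative (\<lambda>h. g1 * h)) (at 0)"
    using d1 by (simp add: G_def has_field_derivative_def)
  have G2: "(G a has_derivative blinfun_apply (blinfun_mult_right (g2' a b))) (at b)" for a b
  proof -
    have "((\<lambda>h. G a (h + b)) has_real_derivative g2' a b) (at 0)"
      using d2[of "x + a *\<^sub>R axis 1 1 + b *\<^sub>R axis 2 1"]
      by (simp add: G_def g2'_def algebra_simps)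
    then show ?thesis
      using DERIV_shift[of "G a" _ 0 b]
      by (simp add: has_field_derivative_def blinfun_mult_right.rep_eq add.commute)
  qed
  have G2_cont: "continuous (at (0, 0) within UNIV \<times> UNIV) (\<lambda>(a, b). blinfun_mult_right (g2' a b))"
  proof -
    have "continuous_on UNIV (\<lambda>p. g2' (fst p) (snd p))"
      unfolding g2'_def by (rule continuous_on_compose2[OF c2]) (auto intro!: continuous_intros)
    then show ?thesis
      by (auto simp: case_prod_unfold continuous_on_eq_continuous_at
          intro!: bounded_linear.continuous[OF bounded_linear_blinfun_mult_right])
  qed
  have "((\<lambda>(a, b). G a b) has_derivative (\<lambda>(da, db). g1 * da + g2 x * db)) (at (0, 0))"
    using has_derivative_partialsI[OF G1 G2 G2_cont] by (simp add: blinfun_mult_right.rep_eq g2'_def)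
  moreover have "((\<lambda>y. (y$1 - x$1, y$2 - x$2)) has_derivative (\<lambda>k. (k$1, k$2))) (at x)"
    by (auto intro!: derivative_eq_intros bounded_linear_imp_has_derivative bounded_linear_vec_nth)
  ultimately have "((\<lambda>(a, b). G a b) \<circ> (\<lambda>y. (y$1 - x$1, y$2 - x$2)) has_derivative
      (\<lambda>(da, db). g1 * da + g2 x * db) \<circ> (\<lambda>k. (k$1, k$2))) (at x)"
    using diff_chain_at by fastforce
  moreover have "x + (y$1 - x$1) *\<^sub>R axis 1 1 + (y$2 - x$2) *\<^sub>R axis 2 1 = y" for y
    by (simp add: vec_eq_iff forall_2 axis_def)
  then have "(\<lambda>(a, b). G a b) \<circ> (\<lambda>y. (y$1 - x$1, y$2 - x$2)) = g"
    by (simp add: G_def o_def)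
  ultimately show ?thesis
    by (simp add: o_def mult.commute)
qed

lemma smooth_st_has_derivative:
  assumes f: "smooth_st Basis2 f"
  shows "((\<lambda>(s, y). f s y) has_derivative (\<lambda>(ds, dy). ds * ptime f t x + grad f t x \<bullet> dy)) (at (t, x))"
proof -
  define L where "L s y = Blinfun (\<lambda>k::real^2. grad f s y \<bullet> k)" for s y
  have L_apply: "blinfun_apply (L s y) = (\<lambda>k. grad f s y \<bullet> k)" for s y
    unfolding L_def by (rule bounded_linear_Blinfun_apply) (rule bounded_linear_inner_right)
  have f_time: "((\<lambda>s. f s x) has_derivative (\<lambda>h. ptime f t x * h)) (at t)"
    using smooth_st_has_real_derivative_ptime[OF f] by (simp add: has_field_derivative_def)
  have f_space: "(f s has_derivative blinfun_apply (L s y)) (at y)" for s y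
  proof -
    have "continuous_on UNIV (pdir (axis 2 1) f s)"
      by (intro smooth_st_continuous_on_compose[OF smooth_st_pdir[OF f axis_in_Basis2]] continuous_intros)
    with has_derivative_plane_partials[of "f s" y "pdir (axis 1 1) f s y" "pdir (axis 2 1) f s"]
    have "(f s has_derivative (\<lambda>k. k$1 * pdir (axis 1 1) f s y + k$2 * pdir (axis 2 1) f s y)) (at y)"
      using smooth_st_has_real_derivative_pdir[OF f axis_in_Basis2, where a=0] by simp
    then show ?thesis
      by (simp add: L_apply inner_vec2 mult.commute)
  qed
  have L_cont: "continuous (at (t, x) within UNIV \<times> UNIV) (\<lambda>(s, y). L s y)"
  proof (rule continuous_blinfun_componentwiseI)
    fix i :: real and j :: "real^2"
    assume "i \<in> Basis" "j \<in> Basis"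
    then obtain k where "i = 1" "j = axis k 1" by (auto simp: Basis_vec_def)
    moreover have "continuous (at (t, x)) (\<lambda>p. pdir (axis k 1) f (fst p) (snd p))"
      using smooth_st_continuous_on[OF smooth_st_pdir[OF f axis_in_Basis2]]
      by (simp add: continuous_on_eq_continuous_at)
    ultimately show "continuous (at (t, x) within UNIV \<times> UNIV) (\<lambda>p. blinfun_apply (case p of (s, y) \<Rightarrow> L s y) j \<bullet> i)"
      by (simp add: L_apply case_prod_unfold inner_axis)
  qed
  show ?thesis
    using has_derivative_partialsI[OF f_time f_space L_cont] by (simp add: L_apply mult.commute)
qed

lemma smooth_st_chain_rule:
  assumes f: "smooth_st Basis2 f"
    and \<tau>: "(\<tau> has_real_derivative \<tau>') (at r)"
    and p: "(p has_vector_derivative p') (at r)"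
  shows "((\<lambda>r. f (\<tau> r) (p r)) has_real_derivative
    \<tau>' * ptime f (\<tau> r) (p r) + grad f (\<tau> r) (p r) \<bullet> p') (at r)"
proof -
  have "((\<lambda>r. (\<tau> r, p r)) has_derivative (\<lambda>h. (\<tau>' * h, h *\<^sub>R p'))) (at r)"
    using has_derivative_Pair \<tau> p unfolding has_field_derivative_def has_vector_derivative_def by blast
  from diff_chain_at[OF this smooth_st_has_derivative[OF f]] show ?thesis
    unfolding has_field_derivative_def
    by (simp add: o_def) (erule has_derivative_eq_rhs, auto simp: fun_eq_iff algebra_simps)
qed

lemma has_vector_derivative_vec_nth:
  "(f has_vector_derivative f') (at s) \<Longrightarrow> ((\<lambda>s. f s $ i) has_real_derivative f' $ i) (at s)"
  unfolding has_field_derivative_def has_vector_derivative_def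
  by (rule has_derivative_eq_rhs[OF bounded_linear.has_derivative[OF bounded_linear_vec_nth]])
     (auto simp: fun_eq_iff)

lemma has_vector_derivative_vecI:
  fixes f :: "real \<Rightarrow> real^'n"
  assumes "\<And>i. ((\<lambda>s. f s $ i) has_real_derivative f' $ i) (at s)"
  shows "(f has_vector_derivative f') (at s)"
  unfolding has_vector_derivative_def
proof (subst has_derivative_componentwise_within, intro ballI)
  fix b :: "real^'n" assume "b \<in> Basis"
  then obtain k where b: "b = axis k 1" by (auto simp: Basis_vec_def)
  show "((\<lambda>x. f x \<bullet> b) has_derivative (\<lambda>x. x *\<^sub>R f' \<bullet> b)) (at s)"
    using assms[of k] unfolding has_field_derivative_def
    by (simp add: b inner_axis) (erule has_derivative_eq_rhs, simp add: fun_eq_iff)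
qed

section \<open>Transport of loop integrals\<close>

definition loop_tangent :: "(real \<Rightarrow> real \<Rightarrow> real^2) \<Rightarrow> real \<Rightarrow> real \<Rightarrow> real^2" where
  "loop_tangent c t s = (\<chi> i. pdir 1 (\<lambda>t s. c t s $ i) t s)"

lemma loop_tangent_nth: "loop_tangent c t s $ i = pdir 1 (\<lambda>t s. c t s $ i) t s"
  by (simp add: loop_tangent_def)

lemma loop_tangent_has_vector_derivative:
  assumes c: "\<And>i. smooth_st {1} (\<lambda>t s. c t s $ i)"
  shows "(c t has_vector_derivative loop_tangent c t s) (at s)"
  by (rule has_vector_derivative_vecI)
     (use smooth_st_has_real_derivative_pdir[OF c, where u=1 and t=t and x=0 and a=s] in \<open>simp add: loop_tangent_nth\<close>)

lemma continuous_on_loop_tangent: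
  assumes c: "\<And>i. smooth_st {1} (\<lambda>t s. c t s $ i)"
  shows "continuous_on UNIV (\<lambda>p. loop_tangent c (fst p) (snd p) $ i)"
  using smooth_st_continuous_on[OF smooth_st_pdir[OF c]] by (simp add: loop_tangent_nth)

lemma continuous_on_loop:
  assumes c: "\<And>i. smooth_st {1} (\<lambda>t s. c t s $ i)"
  shows "continuous_on UNIV (\<lambda>p. c (fst p) (snd p))"
proof -
  have "continuous_on UNIV (\<lambda>p. \<chi> i. c (fst p) (snd p) $ i)"
    by (intro continuous_on_vec_lambda smooth_st_continuous_on[OF c])
  then show ?thesis by (simp add: vec_lambda_eta)
qed

lemma has_real_derivative_loop_tangent:
  assumes v: "\<And>i. smooth_st Basis2 (\<lambda>t x. v t x $ i)"
    and c: "\<And>i. smooth_st {1} (\<lambda>t s. c t s $ i)"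
    and material: "\<And>t s. ((\<lambda>\<tau>. c \<tau> s) has_vector_derivative v t (c t s)) (at t)"
  shows "((\<lambda>\<tau>. loop_tangent c \<tau> s $ i) has_real_derivative
    grad (\<lambda>t x. v t x $ i) t (c t s) \<bullet> loop_tangent c t s) (at t)"
proof -
  have ptime_c: "ptime (\<lambda>t s. c t s $ i) = (\<lambda>t s. v t (c t s) $ i)"
    by (intro ext ptime_eqI has_vector_derivative_vec_nth material)
  have "((\<lambda>\<sigma>. v t (c t \<sigma>) $ i) has_real_derivative
      grad (\<lambda>t x. v t x $ i) t (c t s) \<bullet> loop_tangent c t s) (at s)"
    using smooth_st_chain_rule[OF v DERIV_const loop_tangent_has_vector_derivative[OF c]] by simp
  then have chain: "((\<lambda>h. v t (c t (s + h *\<^sub>R 1)) $ i) has_real_derivative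
      grad (\<lambda>t x. v t x $ i) t (c t s) \<bullet> loop_tangent c t s) (at 0)"
    using DERIV_shift[of "\<lambda>\<sigma>. v t (c t \<sigma>) $ i" _ 0 s] by (simp add: add.commute)
  have "ptime (\<lambda>t s. loop_tangent c t s $ i) t s = ptime (pdir 1 (\<lambda>t s. c t s $ i)) t s"
    by (simp add: loop_tangent_nth)
  also have "\<dots> = pdir 1 (ptime (\<lambda>t s. c t s $ i)) t s"
    by (rule pdir_ptime_commute[OF c, symmetric]) simp
  also have "\<dots> = grad (\<lambda>t x. v t x $ i) t (c t s) \<bullet> loop_tangent c t s"
    unfolding ptime_c by (rule pdir_eqI[where f="\<lambda>t s. v t (c t s) $ i", OF chain])
  finally have ptime_T: "ptime (\<lambda>t s. loop_tangent c t s $ i) t s = grad (\<lambda>t x. v t x $ i) t (c t s) \<bullet> loop_tangent c t s" .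
  have "smooth_st {1} (\<lambda>t s. loop_tangent c t s $ i)"
    using smooth_st_pdir[OF c] by (simp add: loop_tangent_nth)
  from smooth_st_has_real_derivative_ptime[OF this, of s t] show ?thesis
    unfolding ptime_T .
qed

lemma inner_ptimev_lie1:
  "(ptimev \<alpha> t x + lie1 v \<alpha> t x) \<bullet> T =
    (\<Sum>i\<in>UNIV. \<alpha> t x $ i * (grad (\<lambda>t x. v t x $ i) t x \<bullet> T)
      + (ptime (\<lambda>t x. \<alpha> t x $ i) t x + grad (\<lambda>t x. \<alpha> t x $ i) t x \<bullet> v t x) * T $ i)"
  by (simp add: ptimev_def lie1_def inner_vec2 sum_2 algebra_simps)

lemma has_real_derivative_loop_integrand:
  fixes \<alpha> v :: "real \<Rightarrow> real^2 \<Rightarrow> real^2" and c :: "real \<Rightarrow> real \<Rightarrow> real^2"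
  assumes \<alpha>: "\<And>i. smooth_st Basis2 (\<lambda>t x. \<alpha> t x $ i)"
    and v: "\<And>i. smooth_st Basis2 (\<lambda>t x. v t x $ i)"
    and c: "\<And>i. smooth_st {1} (\<lambda>t s. c t s $ i)"
    and material: "\<And>t s. ((\<lambda>\<tau>. c \<tau> s) has_vector_derivative v t (c t s)) (at t)"
  shows "((\<lambda>\<tau>. \<alpha> \<tau> (c \<tau> s) \<bullet> loop_tangent c \<tau> s) has_real_derivative
    (ptimev \<alpha> t (c t s) + lie1 v \<alpha> t (c t s)) \<bullet> loop_tangent c t s) (at t)"
proof -
  have "((\<lambda>\<tau>. \<alpha> \<tau> (c \<tau> s) $ i) has_real_derivative
      ptime (\<lambda>t x. \<alpha> t x $ i) t (c t s) + grad (\<lambda>t x. \<alpha> t x $ i) t (c t s) \<bullet> v t (c t s)) (at t)" for i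
    using smooth_st_chain_rule[OF \<alpha> DERIV_ident material] by simp
  moreover have "(\<lambda>\<tau>. \<alpha> \<tau> (c \<tau> s) \<bullet> loop_tangent c \<tau> s)
      = (\<lambda>\<tau>. \<Sum>i\<in>UNIV. \<alpha> \<tau> (c \<tau> s) $ i * loop_tangent c \<tau> s $ i)"
    by (simp add: inner_vec_def)
  ultimately show ?thesis
    unfolding inner_ptimev_lie1
    by (auto intro!: DERIV_sum DERIV_mult' has_real_derivative_loop_tangent[OF v c material])
qed

lemma loop_int_transport:
  fixes \<alpha> v :: "real \<Rightarrow> real^2 \<Rightarrow> real^2" and c :: "real \<Rightarrow> real \<Rightarrow> real^2"
  assumes \<alpha>: "\<And>i. smooth_st Basis2 (\<lambda>t x. \<alpha> t x $ i)"
    and v: "\<And>i. smooth_st Basis2 (\<lambda>t x. v t x $ i)"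
    and c: "\<And>i. smooth_st {1} (\<lambda>t s. c t s $ i)"
    and material: "\<And>t s. ((\<lambda>\<tau>. c \<tau> s) has_vector_derivative v t (c t s)) (at t)"
  shows "((\<lambda>t. loop_int \<alpha> c t) has_real_derivative
    loop_int (\<lambda>t x. ptimev \<alpha> t x + lie1 v \<alpha> t x) c t) (at t)"
proof -
  define F where "F \<beta> t s = \<beta> t (c t s) \<bullet> loop_tangent c t s" for \<beta> t s
  have loop_int_eq: "loop_int \<beta> c t = integral {0..1} (F \<beta> t)" for \<beta> t
    unfolding loop_int_def F_def
    using vector_derivative_at[OF loop_tangent_has_vector_derivative[OF c]] by simp
  note along_flow = smooth_st_continuous_on_compose[OF _ continuous_on_fst continuous_on_loop[OF c]]
  note continuous_on_fields = along_flow[OF \<alpha>] along_flow[OF smooth_st_ptime[OF \<alpha>]]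
    along_flow[OF smooth_st_pdir[OF \<alpha> axis_in_Basis2]] along_flow[OF v]
    along_flow[OF smooth_st_pdir[OF v axis_in_Basis2]] continuous_on_loop_tangent[OF c]
  have "continuous_on UNIV (\<lambda>p. F \<alpha> (fst p) (snd p))"
    unfolding F_def inner_vec2 by (intro continuous_intros continuous_on_fields)
  then have "continuous_on {0..1} (F \<alpha> \<tau>)" for \<tau>
    using continuous_on_compose2[OF _ continuous_on_Pair[OF continuous_on_const continuous_on_id]] by fastforce
  moreover have "continuous_on UNIV (\<lambda>p. F (\<lambda>t x. ptimev \<alpha> t x + lie1 v \<alpha> t x) (fst p) (snd p))"
    unfolding F_def inner_ptimev_lie1 unfolding inner_vec2 grad_nth
    by (intro continuous_intros continuous_on_fields)
  ultimately show ?thesis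
    unfolding loop_int_eq
    by (intro has_real_derivative_integral_parameter integrable_continuous_real)
       (simp_all add: F_def has_real_derivative_loop_integrand[OF \<alpha> v c material])
qed

section \<open>Material derivatives of 1-forms\<close>

text \<open>Unlike \<^const>\<open>smooth_st\<close>, this pointwise condition is readily shown for quotients such as
  \<^const>\<open>wtil\<close>.\<close>

definition has_partials :: "(real \<Rightarrow> real^2 \<Rightarrow> real) \<Rightarrow> real \<Rightarrow> real^2 \<Rightarrow> bool" where
  "has_partials f t x \<longleftrightarrow> (\<lambda>s. f s x) differentiable (at t)
     \<and> (\<forall>i. (\<lambda>h. f t (x + h *\<^sub>R axis i 1)) differentiable (at 0))"

lemma has_partials_ptime:
  "has_partials f t x \<Longrightarrow> ((\<lambda>s. f s x) has_real_derivative ptime f t x) (at t)"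
  unfolding has_partials_def by (simp add: has_real_derivative_ptimeI)

lemma has_partials_pdir:
  "has_partials f t x \<Longrightarrow> ((\<lambda>h. f t (x + h *\<^sub>R axis i 1)) has_real_derivative pdir (axis i 1) f t x) (at 0)"
  unfolding has_partials_def by (simp add: has_real_derivative_pdirI)

lemma smooth_st_has_partials: "smooth_st Basis2 f \<Longrightarrow> has_partials f t x"
  unfolding has_partials_def
  using smooth_st_differentiable_time smooth_st_differentiable_along[OF _ axis_in_Basis2] by blast

lemma has_partials_const: "has_partials (\<lambda>t x. c) t x"
  by (simp add: has_partials_def)

lemma has_partials_add:
  "has_partials f t x \<Longrightarrow> has_partials g t x \<Longrightarrow> has_partials (\<lambda>t x. f t x + g t x) t x"
  unfolding has_partials_def by (auto intro!: derivative_intros)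

lemma has_partials_mult:
  "has_partials f t x \<Longrightarrow> has_partials g t x \<Longrightarrow> has_partials (\<lambda>t x. f t x * g t x) t x"
  unfolding has_partials_def by (auto intro!: derivative_intros)

lemma has_partials_divide:
  "has_partials f t x \<Longrightarrow> has_partials g t x \<Longrightarrow> g t x \<noteq> 0 \<Longrightarrow>
   has_partials (\<lambda>t x. f t x / g t x) t x"
  unfolding has_partials_def by (auto intro!: derivative_intros)

lemma grad_eqI:
  "(\<And>i. ((\<lambda>h. f t (x + h *\<^sub>R axis i 1)) has_real_derivative g $ i) (at 0)) \<Longrightarrow> grad f t x = g"
  by (simp add: vec_eq_iff pdir_eqI)

lemma ptimev_add:
  assumes "\<And>i. has_partials (\<lambda>t x. \<alpha> t x $ i) t x" "\<And>i. has_partials (\<lambda>t x. \<beta> t x $ i) t x"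
  shows "ptimev (\<lambda>t x. \<alpha> t x + \<beta> t x) t x = ptimev \<alpha> t x + ptimev \<beta> t x"
  unfolding ptimev_def
  by (simp add: vec_eq_iff) (intro allI ptime_eqI DERIV_add has_partials_ptime assms)

lemma lie1_add:
  assumes "\<And>i. has_partials (\<lambda>t x. \<alpha> t x $ i) t x" "\<And>i. has_partials (\<lambda>t x. \<beta> t x $ i) t x"
  shows "lie1 v (\<lambda>t x. \<alpha> t x + \<beta> t x) t x = lie1 v \<alpha> t x + lie1 v \<beta> t x"
proof -
  have "pdir (axis j 1) (\<lambda>s y. \<alpha> s y $ i + \<beta> s y $ i) t x
      = pdir (axis j 1) (\<lambda>s y. \<alpha> s y $ i) t x + pdir (axis j 1) (\<lambda>s y. \<beta> s y $ i) t x" for i j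
    by (intro pdir_eqI DERIV_add has_partials_pdir assms)
  then show ?thesis
    by (simp add: lie1_def vec_eq_iff sum.distrib algebra_simps)
qed

lemma ptimev_lie1_scaleR_grad:
  assumes f: "has_partials f t x" and g: "smooth_st Basis2 g"
    and v: "\<And>i. has_partials (\<lambda>t x. v t x $ i) t x"
  shows "ptimev (\<lambda>t x. f t x *\<^sub>R grad g t x) t x + lie1 v (\<lambda>t x. f t x *\<^sub>R grad g t x) t x
    = (ptime f t x + v t x \<bullet> grad f t x) *\<^sub>R grad g t x
      + f t x *\<^sub>R grad (\<lambda>t x. ptime g t x + v t x \<bullet> grad g t x) t x"
proof -
  note g_partials = smooth_st_has_partials[OF g] smooth_st_has_partials[OF smooth_st_ptime[OF g]]
    smooth_st_has_partials[OF smooth_st_pdir[OF g axis_in_Basis2]]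
  have time: "ptime (\<lambda>s y. f s y * pdir (axis i 1) g s y) t x
      = ptime f t x * pdir (axis i 1) g t x + f t x * ptime (pdir (axis i 1) g) t x" for i
    by (rule ptime_eqI) (auto intro!: derivative_eq_intros has_partials_ptime f g_partials)
  have space: "pdir (axis j 1) (\<lambda>s y. f s y * pdir (axis i 1) g s y) t x
      = pdir (axis j 1) f t x * pdir (axis i 1) g t x + f t x * pdir (axis j 1) (pdir (axis i 1) g) t x" for i j
    by (rule pdir_eqI) (auto intro!: derivative_eq_intros has_partials_pdir f g_partials)
  have material: "grad (\<lambda>t x. ptime g t x + v t x \<bullet> grad g t x) t x
      = (\<chi> i. pdir (axis i 1) (ptime g) t x
        + (\<Sum>j\<in>UNIV. pdir (axis i 1) (\<lambda>s y. v s y $ j) t x * pdir (axis j 1) g t x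
          + v t x $ j * pdir (axis i 1) (pdir (axis j 1) g) t x))"
    unfolding inner_vec2 grad_nth sum_2
    by (rule grad_eqI) (auto intro!: derivative_eq_intros has_partials_pdir v g_partials)
  have commute_time: "pdir (axis i 1) (ptime g) t x = ptime (pdir (axis i 1) g) t x" for i
    by (rule pdir_ptime_commute[OF g axis_in_Basis2])
  have commute_space: "pdir (axis j 1) (pdir (axis i 1) g) t x = pdir (axis i 1) (pdir (axis j 1) g) t x" for i j
    by (rule pdir_pdir_commute[OF g axis_in_Basis2 axis_in_Basis2])
  show ?thesis
    unfolding vec_eq_iff material
    by (simp add: ptimev_def lie1_def time space commute_time commute_space inner_vec2 sum_2 algebra_simps)
qed

lemma has_partials_norm_power2:
  fixes v :: "real \<Rightarrow> real^2 \<Rightarrow> real^2"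
  assumes "\<And>i. has_partials (\<lambda>t x. v t x $ i) t x"
  shows "has_partials (\<lambda>t x. (norm (v t x))^2) t x"
  unfolding norm_vec2 unfolding power2_eq_square by (intro has_partials_add has_partials_mult assms)

lemma ptimev_lie1_add_scaleR_grad:
  assumes \<alpha>: "\<And>i. has_partials (\<lambda>t x. \<alpha> t x $ i) t x"
    and f: "has_partials f t x" and g: "smooth_st Basis2 g"
    and v: "\<And>i. has_partials (\<lambda>t x. v t x $ i) t x"
  shows "ptimev (\<lambda>t x. \<alpha> t x + f t x *\<^sub>R grad g t x) t x + lie1 v (\<lambda>t x. \<alpha> t x + f t x *\<^sub>R grad g t x) t x
    = (ptimev \<alpha> t x + lie1 v \<alpha> t x)
      + ((ptime f t x + v t x \<bullet> grad f t x) *\<^sub>R grad g t x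
        + f t x *\<^sub>R grad (\<lambda>t x. ptime g t x + v t x \<bullet> grad g t x) t x)"
proof -
  have \<beta>: "has_partials (\<lambda>t x. (f t x *\<^sub>R grad g t x) $ i) t x" for i
    using has_partials_mult[OF f smooth_st_has_partials[OF smooth_st_pdir[OF g axis_in_Basis2]]] by simp
  show ?thesis
    using ptimev_add[OF \<alpha> \<beta>] lie1_add[OF \<alpha> \<beta>] ptimev_lie1_scaleR_grad[OF f g v] by (simp add: add_ac)
qed

lemma material_derivative_cmult:
  assumes "has_partials f t x"
  shows "ptime (\<lambda>t x. a * f t x) t x + v t x \<bullet> grad (\<lambda>t x. a * f t x) t x
    = a * (ptime f t x + v t x \<bullet> grad f t x)"
proof -
  have "ptime (\<lambda>t x. a * f t x) t x = a * ptime f t x"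
    by (intro ptime_eqI DERIV_cmult has_partials_ptime assms)
  moreover have "grad (\<lambda>t x. a * f t x) t x = a *\<^sub>R grad f t x"
    by (rule grad_eqI) (auto intro!: derivative_eq_intros has_partials_pdir assms)
  ultimately show ?thesis by (simp add: algebra_simps)
qed

section \<open>The augmented water-wave equations\<close>

lemma Phi_ge_one: "0 \<le> \<epsilon> \<Longrightarrow> 1 \<le> Phi \<sigma> \<epsilon> \<zeta> t x"
  by (simp add: Phi_def)

lemma wtil_mult_Phi: "0 \<le> \<epsilon> \<Longrightarrow> wtil \<sigma> \<epsilon> \<zeta> w t x * Phi \<sigma> \<epsilon> \<zeta> t x = w t x"
  using Phi_ge_one[of \<epsilon> \<sigma> \<zeta> t x] by (simp add: wtil_def)

lemma has_partials_Phi: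
  assumes "smooth_st Basis2 \<zeta>"
  shows "has_partials (Phi \<sigma> \<epsilon> \<zeta>) t x"
proof -
  have "has_partials (pdir (axis i 1) \<zeta>) t x" for i
    by (rule smooth_st_has_partials[OF smooth_st_pdir[OF assms axis_in_Basis2]])
  then show ?thesis
    unfolding Phi_def[abs_def] norm_vec2 grad_nth unfolding power2_eq_square
    by (intro has_partials_add has_partials_mult has_partials_const)
qed

lemma has_partials_wtil:
  "0 \<le> \<epsilon> \<Longrightarrow> smooth_st Basis2 \<zeta> \<Longrightarrow> smooth_st Basis2 w \<Longrightarrow> has_partials (wtil \<sigma> \<epsilon> \<zeta> w) t x"
  using has_partials_divide[OF smooth_st_has_partials has_partials_Phi] Phi_ge_one[of \<epsilon> \<sigma> \<zeta> t x]
  by (simp add: wtil_def[abs_def])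

lemma grad_acwwe_potential:
  fixes v :: "real \<Rightarrow> real^2 \<Rightarrow> real^2"
  assumes "Fr \<noteq> 0" and "\<And>i. has_partials (\<lambda>t x. v t x $ i) t x"
    and "has_partials w t x" and "has_partials \<zeta> t x"
  shows "grad (\<lambda>t x. (1/2) * ((norm (v t x))^2 + \<sigma>^2 * (w t x)^2) - \<zeta> t x / Fr^2) t x
    = (1/2) *\<^sub>R grad (\<lambda>t x. (norm (v t x))^2) t x + (\<sigma>^2 * w t x) *\<^sub>R grad w t x
      - (1 / Fr^2) *\<^sub>R grad \<zeta> t x"
proof -
  define N where "N = (\<lambda>t x. (norm (v t x))^2)"
  have "has_partials N t x"
    unfolding N_def using assms(2) by (rule has_partials_norm_power2)
  then have "grad (\<lambda>t x. (1/2) * (N t x + \<sigma>^2 * (w t x)^2) - \<zeta> t x / Fr^2) t x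
      = (1/2) *\<^sub>R grad N t x + (\<sigma>^2 * w t x) *\<^sub>R grad w t x - (1 / Fr^2) *\<^sub>R grad \<zeta> t x"
    using assms(1,3,4)
    by (intro grad_eqI) (auto intro!: derivative_eq_intros has_partials_pdir simp: field_simps)
  then show ?thesis by (simp only: N_def)
qed

lemma acwwe_lie_transport_velocity:
  fixes v :: "real \<Rightarrow> real^2 \<Rightarrow> real^2" and \<zeta> w D :: "real \<Rightarrow> real^2 \<Rightarrow> real"
  assumes \<sigma>: "\<sigma> \<noteq> 0" and Fr: "Fr \<noteq> 0" and \<epsilon>: "0 \<le> \<epsilon>"
    and v: "\<And>i. smooth_st Basis2 (\<lambda>t x. v t x $ i)" and \<zeta>: "smooth_st Basis2 \<zeta>"
    and w: "smooth_st Basis2 w"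
    and momentum:
      "ptimev (\<lambda>t x. v t x + (\<sigma>^2 * wtil \<sigma> \<epsilon> \<zeta> w t x) *\<^sub>R grad \<zeta> t x) t x
      + lie1 v (\<lambda>t x. v t x + (\<sigma>^2 * wtil \<sigma> \<epsilon> \<zeta> w t x) *\<^sub>R grad \<zeta> t x) t x
      = grad (\<lambda>t x. (1/2) * ((norm (v t x))^2 + \<sigma>^2 * (w t x)^2) - \<zeta> t x / Fr^2) t x"
    and kinematic: "\<And>t x. ptime \<zeta> t x + v t x \<bullet> grad \<zeta> t x = w t x * Phi \<sigma> \<epsilon> \<zeta> t x"
    and vertical: "ptime (wtil \<sigma> \<epsilon> \<zeta> w) t x + v t x \<bullet> grad (wtil \<sigma> \<epsilon> \<zeta> w) t x
      = - 1 / (\<sigma>^2 * Fr^2) + (2 * \<epsilon> * \<sigma>^2 / D t x)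
        * divg (\<lambda>t x. (D t x * wtil \<sigma> \<epsilon> \<zeta> w t x * w t x) *\<^sub>R grad \<zeta> t x) t x"
  shows "ptimev v t x + lie1 v v t x
    = (1/2) *\<^sub>R grad (\<lambda>t x. (norm (v t x))^2) t x
      - ((\<sigma>^2 / 2) * (wtil \<sigma> \<epsilon> \<zeta> w t x)^2) *\<^sub>R grad (\<lambda>t x. (Phi \<sigma> \<epsilon> \<zeta> t x)^2) t x
      - ((2 * \<epsilon> * \<sigma>^4 / D t x)
          * divg (\<lambda>t x. (D t x * wtil \<sigma> \<epsilon> \<zeta> w t x * w t x) *\<^sub>R grad \<zeta> t x) t x) *\<^sub>R grad \<zeta> t x"
proof -
  let ?W = "wtil \<sigma> \<epsilon> \<zeta> w" and ?\<Phi> = "Phi \<sigma> \<epsilon> \<zeta>"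
  let ?div = "divg (\<lambda>t x. (D t x * ?W t x * w t x) *\<^sub>R grad \<zeta> t x) t x"
  note \<Phi>_partials = has_partials_Phi[OF \<zeta>, of \<sigma> \<epsilon>]
    and W_partials = has_partials_wtil[OF \<epsilon> \<zeta> w, of \<sigma>]
    and w_partials = smooth_st_has_partials[OF w]
    and \<zeta>_partials = smooth_st_has_partials[OF \<zeta>]
    and v_partials = smooth_st_has_partials[OF v]
  have material_\<sigma>W: "ptime (\<lambda>t x. \<sigma>^2 * ?W t x) t x + v t x \<bullet> grad (\<lambda>t x. \<sigma>^2 * ?W t x) t x
      = - 1 / Fr^2 + (2 * \<epsilon> * \<sigma>^4 / D t x) * ?div"
  proof -
    have "ptime (\<lambda>t x. \<sigma>^2 * ?W t x) t x + v t x \<bullet> grad (\<lambda>t x. \<sigma>^2 * ?W t x) t x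
        = \<sigma>^2 * (- 1 / (\<sigma>^2 * Fr^2) + (2 * \<epsilon> * \<sigma>^2 / D t x) * ?div)"
      unfolding material_derivative_cmult[OF W_partials] vertical ..
    then show ?thesis
      using \<sigma> by (simp add: field_simps power4_eq_xxxx power2_eq_square)
  qed
  have grad_material_\<zeta>: "grad (\<lambda>t x. ptime \<zeta> t x + v t x \<bullet> grad \<zeta> t x) t x
      = ?\<Phi> t x *\<^sub>R grad w t x + w t x *\<^sub>R grad ?\<Phi> t x"
    unfolding kinematic
    by (rule grad_eqI) (auto intro!: derivative_eq_intros has_partials_pdir w_partials \<Phi>_partials)
  have grad_\<Phi>2: "grad (\<lambda>t x. (?\<Phi> t x)^2) t x = (2 * ?\<Phi> t x) *\<^sub>R grad ?\<Phi> t x"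
    by (rule grad_eqI) (auto intro!: derivative_eq_intros has_partials_pdir \<Phi>_partials)
  note split = ptimev_lie1_add_scaleR_grad[OF v_partials has_partials_mult[OF has_partials_const W_partials]
      \<zeta> v_partials]
  \<comment> \<open>with \<open>w = wtil * Phi\<close> the \<open>\<sigma>\<^sup>2 w \<nabla>w\<close> terms cancel and \<open>\<sigma>\<^sup>2 wtil w \<nabla>Phi = \<sigma>\<^sup>2/2 wtil\<^sup>2 \<nabla>Phi\<^sup>2\<close>\<close>
  from momentum[unfolded split, unfolded material_\<sigma>W grad_material_\<zeta>
      grad_acwwe_potential[OF Fr v_partials w_partials \<zeta>_partials]]
  show ?thesis
    unfolding grad_\<Phi>2 using wtil_mult_Phi[OF \<epsilon>, of \<sigma> \<zeta> w t x, symmetric]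
    by (simp add: vec_eq_iff field_simps power2_eq_square)
qed

theorem mainTheorem4:
  fixes v :: "real \<Rightarrow> real^2 \<Rightarrow> real^2"
    and D \<zeta> w :: "real \<Rightarrow> real^2 \<Rightarrow> real"
    and \<sigma> Fr \<epsilon> :: real
    and c :: "real \<Rightarrow> real \<Rightarrow> real^2"
  assumes par: "\<sigma> > 0" "Fr > 0" "0 \<le> \<epsilon>" "\<epsilon> \<le> 1"
    and smooth: "\<forall>i. smooth_st Basis2 (\<lambda>t x. v t x $ i)" "smooth_st Basis2 D"
        "smooth_st Basis2 \<zeta>" "smooth_st Basis2 w"
    and Dpos: "\<forall>t x. D t x > 0"
    and momentum: "\<forall>t x.
        ptimev (\<lambda>t x. v t x + (\<sigma>^2 * wtil \<sigma> \<epsilon> \<zeta> w t x) *\<^sub>R grad \<zeta> t x) t x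
      + lie1 v (\<lambda>t x. v t x + (\<sigma>^2 * wtil \<sigma> \<epsilon> \<zeta> w t x) *\<^sub>R grad \<zeta> t x) t x
      = grad (\<lambda>t x. (1/2) * ((norm (v t x))^2 + \<sigma>^2 * (w t x)^2) - \<zeta> t x / Fr^2) t x"
    and mass: "\<forall>t x. ptime D t x + divg (\<lambda>t x. D t x *\<^sub>R v t x) t x = 0"
    and kinematic: "\<forall>t x. ptime \<zeta> t x + v t x \<bullet> grad \<zeta> t x = w t x * Phi \<sigma> \<epsilon> \<zeta> t x"
    and vertical: "\<forall>t x. ptime (wtil \<sigma> \<epsilon> \<zeta> w) t x + v t x \<bullet> grad (wtil \<sigma> \<epsilon> \<zeta> w) t x
        = - 1 / (\<sigma>^2 * Fr^2)
          + (2 * \<epsilon> * \<sigma>^2 / D t x)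
            * divg (\<lambda>t x. (D t x * wtil \<sigma> \<epsilon> \<zeta> w t x * w t x) *\<^sub>R grad \<zeta> t x) t x"
    and loop_smooth: "\<forall>i. smooth_st {1::real} (\<lambda>t s. c t s $ i)"
    and loop_closed: "\<forall>t. c t 0 = c t 1"
    and material: "\<forall>t s. ((\<lambda>\<tau>. c \<tau> s) has_vector_derivative v t (c t s)) (at t)"
  shows "\<forall>t. ((\<lambda>t. loop_int v c t) has_real_derivative
      loop_int (\<lambda>t x.
          (1/2) *\<^sub>R grad (\<lambda>t x. (norm (v t x))^2) t x
        - ((\<sigma>^2 / 2) * (wtil \<sigma> \<epsilon> \<zeta> w t x)^2) *\<^sub>R grad (\<lambda>t x. (Phi \<sigma> \<epsilon> \<zeta> t x)^2) t x
        - ((2 * \<epsilon> * \<sigma>^4 / D t x)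
            * divg (\<lambda>t x. (D t x * wtil \<sigma> \<epsilon> \<zeta> w t x * w t x) *\<^sub>R grad \<zeta> t x) t x)
            *\<^sub>R grad \<zeta> t x) c t) (at t)"
proof -
  have \<sigma>: "\<sigma> \<noteq> 0" and Fr: "Fr \<noteq> 0"
    using par by auto
  have v: "\<And>i. smooth_st Basis2 (\<lambda>t x. v t x $ i)" and c: "\<And>i. smooth_st {1} (\<lambda>t s. c t s $ i)"
    using smooth(1) loop_smooth by blast+
  have "((\<lambda>t. loop_int v c t) has_real_derivative loop_int (\<lambda>t x. ptimev v t x + lie1 v v t x) c t) (at t)"
    for t
    by (rule loop_int_transport[OF v v c material[rule_format]])
  then show ?thesis
    by (simp only: acwwe_lie_transport_velocity[OF \<sigma> Fr par(3) v smooth(3,4) momentum[rule_format]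
          kinematic[rule_format] vertical[rule_format]] all_simps) blast
qed

end
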